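(* Let $f:\mathcal X^n\to\mathcal T$, let $L:\mathcal T\times\mathcal T\to\mathbb R_+$ be a loss, $\varepsilon>0$, and let $M$ be an $L$-unbiased, $\varepsilon$-differentially private mechanism with values in $\mathcal T$. Then for all $x,x'\in\mathcal X^n$, $$\mathbb E[L(M(x),f(x))]\le e^{d_H(x,x')\varepsilon}\,\mathbb E[L(M(x'),f(x'))].$$
   Context: $d_H$ is the Hamming distance on $\mathcal X^n$; neighboring means $d_H\le1$. $M$ is $\varepsilon$-differentially private if $\mathbb P(M(x)\in S)\le e^\varepsilon\mathbb P(M(x')\in S)$ for all neighboring $x,x'$ and measurable $S$. $M$ is $L$-unbiased if $\mathbb E[L(M(x),f(x))]\le\mathbb E[L(M(x),t)]$ for all $x\in\mathcal X^n$, $t\in\mathcal T$. *)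

theory Defs
  imports "HOL-Probability.Probability"
begin

text \<open>Datasets in X^n are lists of length n over the type 'a (the data universe X).\<close>

definition hamming :: "'a list \<Rightarrow> 'a list \<Rightarrow> nat" where
  "hamming x y = card {i. i < length x \<and> x ! i \<noteq> y ! i}"

definition is_mechanism :: "nat \<Rightarrow> 'b measure \<Rightarrow> ('a list \<Rightarrow> 'b measure) \<Rightarrow> bool" where
  "is_mechanism n T M \<longleftrightarrow>
     (\<forall>x. length x = n \<longrightarrow> prob_space (M x) \<and> sets (M x) = sets T)"

definition differentially_private ::
    "nat \<Rightarrow> 'b measure \<Rightarrow> real \<Rightarrow> ('a list \<Rightarrow> 'b measure) \<Rightarrow> bool" where
  "differentially_private n T \<epsilon> M \<longleftrightarrow>
     (\<forall>x x'. length x = n \<longrightarrow> length x' = n \<longrightarrow> hamming x x' \<le> 1 \<longrightarrow>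
        (\<forall>S \<in> sets T. measure (M x) S \<le> exp \<epsilon> * measure (M x') S))"

definition expected_loss ::
    "('a list \<Rightarrow> 'b measure) \<Rightarrow> ('b \<Rightarrow> 'b \<Rightarrow> real) \<Rightarrow> 'a list \<Rightarrow> 'b \<Rightarrow> ennreal" where
  "expected_loss M L x t = (\<integral>\<^sup>+ y. ennreal (L y t) \<partial>M x)"

definition unbiased ::
    "nat \<Rightarrow> 'b measure \<Rightarrow> ('b \<Rightarrow> 'b \<Rightarrow> real) \<Rightarrow> ('a list \<Rightarrow> 'b) \<Rightarrow> ('a list \<Rightarrow> 'b measure) \<Rightarrow> bool" where
  "unbiased n T L f M \<longleftrightarrow>
     (\<forall>x. length x = n \<longrightarrow> (\<forall>t \<in> space T. expected_loss M L x (f x) \<le> expected_loss M L x t))"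

end

theory Submission
  imports Defs
begin

text \<open>Changing one coordinate at a time, \<open>\<epsilon>\<close>-differential privacy yields
  \<open>P(M x \<in> S) \<le> e\<^bsup>d\<^sub>H(x,x')\<epsilon>\<^esup> P(M x' \<in> S)\<close>
  (group privacy). Hence \<open>M x\<close> is dominated by \<open>M x'\<close> scaled by \<open>e\<^bsup>d\<^sub>H(x,x')\<epsilon>\<^esup>\<close>,
  so every nonnegative expected loss under \<open>M x\<close> is at most that factor times the one
  under \<open>M x'\<close>. Unbiasedness at \<open>x\<close>, applied to the target \<open>f x'\<close>, lets us
  replace \<open>f x\<close> by \<open>f x'\<close> before changing the measure.\<close>

lemma hamming_eq_0_iff:
  assumes "length x = length y"
  shows "hamming x y = 0 \<longleftrightarrow> x = y"
  using assms by (auto simp: hamming_def intro: nth_equalityI)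

lemma hamming_Suc_obtain:
  assumes len: "length x = length x'" and d: "hamming x x' = Suc d"
  obtains y where "length y = length x" "hamming x y = 1" "hamming y x' = d"
proof -
  let ?D = "{i. i < length x \<and> x ! i \<noteq> x' ! i}"
  have card_D: "card ?D = Suc d"
    using d by (simp add: hamming_def)
  then obtain i where i: "i \<in> ?D"
    by (metis card.empty ex_in_conv nat.distinct(1))
  define y where "y = x[i := x' ! i]"
  have "{j. j < length x \<and> x ! j \<noteq> y ! j} = {i}"
    using i by (auto simp: y_def nth_list_update)
  hence "hamming x y = 1"
    by (simp add: hamming_def)
  moreover have "{j. j < length y \<and> y ! j \<noteq> x' ! j} = ?D - {i}"
    using i by (auto simp: y_def nth_list_update)
  hence "hamming y x' = d"
    using i card_D by (simp add: hamming_def)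
  moreover have "length y = length x"
    by (simp add: y_def)
  ultimately show thesis
    using that by blast
qed

lemma differentially_private_group:
  assumes dp: "differentially_private n T \<epsilon> M" and eps: "\<epsilon> \<ge> 0"
    and x: "length x = n" and x': "length x' = n" and S: "S \<in> sets T"
  shows "measure (M x) S \<le> exp (real (hamming x x') * \<epsilon>) * measure (M x') S"
  using x
proof (induction "hamming x x'" arbitrary: x)
  case 0
  hence "x = x'"
    using x' hamming_eq_0_iff by metis
  thus ?case
    by (simp add: hamming_def)
next
  case (Suc d)
  then obtain y where y: "length y = n" "hamming x y = 1" "hamming y x' = d"
    using x' by (metis hamming_Suc_obtain)
  have "measure (M x) S \<le> exp \<epsilon> * measure (M y) S"
    using dp Suc.prems y S unfolding differentially_private_def by simp
  also have "\<dots> \<le> exp \<epsilon> * (exp (real d * \<epsilon>) * measure (M x') S)"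
    using Suc.hyps(1)[of y] y by (intro mult_left_mono) auto
  also have "\<dots> = exp (real (Suc d) * \<epsilon>) * measure (M x') S"
    by (simp add: exp_add[symmetric] algebra_simps)
  finally show ?case
    using Suc.hyps(2) by simp
qed

lemma nn_integral_le_cmult_if_emeasure_le:
  assumes sets_eq: "sets M = sets N"
    and le: "\<And>A. A \<in> sets N \<Longrightarrow> emeasure M A \<le> c * emeasure N A"
    and f: "f \<in> borel_measurable N"
  shows "(\<integral>\<^sup>+ y. f y \<partial>M) \<le> c * (\<integral>\<^sup>+ y. f y \<partial>N)"
proof -
  let ?cN = "density N (\<lambda>_. c)"
  have sets_cN: "sets ?cN = sets M"
    using sets_eq by simp
  have "emeasure M A \<le> emeasure ?cN A" for A
    using le sets_eq by (cases "A \<in> sets N") (simp_all add: emeasure_density_const emeasure_notin_sets)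
  hence "M \<le> ?cN"
    using sets_cN sets_eq_imp_space_eq[OF sets_cN] by (simp add: le_measure_iff le_fun_def)
  hence "(\<integral>\<^sup>+ y. f y \<partial>M) \<le> (\<integral>\<^sup>+ y. f y \<partial>?cN)"
    using sets_cN by (intro nn_integral_mono_measure) auto
  also have "\<dots> = c * (\<integral>\<^sup>+ y. f y \<partial>N)"
    using f by (simp add: nn_integral_density nn_integral_cmult)
  finally show ?thesis .
qed

theorem lemmaA2:
  fixes n :: nat and T :: "'b measure" and f :: "'a list \<Rightarrow> 'b"
    and L :: "'b \<Rightarrow> 'b \<Rightarrow> real" and \<epsilon> :: real and M :: "'a list \<Rightarrow> 'b measure"
  assumes f_range: "\<And>x. length x = n \<Longrightarrow> f x \<in> space T"
    and L_nonneg: "\<And>s t. s \<in> space T \<Longrightarrow> t \<in> space T \<Longrightarrow> L s t \<ge> 0"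
    and L_meas: "\<And>t. t \<in> space T \<Longrightarrow> (\<lambda>s. L s t) \<in> borel_measurable T"
    and eps_pos: "\<epsilon> > 0"
    and mech: "is_mechanism n T M"
    and unb: "unbiased n T L f M"
    and dp: "differentially_private n T \<epsilon> M"
    and x: "length x = n" and x': "length x' = n"
  shows "expected_loss M L x (f x) \<le> ennreal (exp (real (hamming x x') * \<epsilon>)) * expected_loss M L x' (f x')"
proof -
  let ?c = "exp (real (hamming x x') * \<epsilon>)"
  have Mx: "prob_space (M x)" "sets (M x) = sets T"
    and Mx': "prob_space (M x')" "sets (M x') = sets T"
    using mech x x' by (auto simp: is_mechanism_def)
  have dominated: "emeasure (M x) A \<le> ennreal ?c * emeasure (M x') A" if "A \<in> sets (M x')" for A
    using differentially_private_group[OF dp _ x x', of A] eps_pos that Mx Mx'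
    by (simp add: prob_space_def finite_measure.emeasure_eq_measure ennreal_mult[symmetric] ennreal_leI)
  have "(\<lambda>s. ennreal (L s (f x'))) \<in> borel_measurable (M x')"
    unfolding measurable_cong_sets[OF Mx'(2) refl]
    using L_meas[OF f_range[OF x']] by (rule measurable_compose[OF _ measurable_ennreal])
  hence "expected_loss M L x (f x') \<le> ennreal ?c * expected_loss M L x' (f x')"
    unfolding expected_loss_def
    using Mx'(2) Mx(2) dominated by (intro nn_integral_le_cmult_if_emeasure_le) auto
  moreover have "expected_loss M L x (f x) \<le> expected_loss M L x (f x')"
    using unb x f_range[OF x'] unfolding unbiased_def by blast
  ultimately show ?thesis
    by order
qed

end
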